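(* Let $n\ge 2$ and let $L$ be a totally real Galois extension of $\mathbb{Q}$ with $\operatorname{Gal}(L/\mathbb{Q})\cong(\mathbb{Z}/2\mathbb{Z})^n$. Let $E\subset\mathcal{O}_L^*$ be the subgroup generated by the fundamental units $u_K>1$ of the $2^n-1$ quadratic subfields $K$ of $L$. Then every nonzero $w\in\bigwedge^2\operatorname{LOG}(E)$ satisfies \[ \|w\|_1 \geq 2^{2n-1}\log\left(\frac{1+\sqrt5}{2}\right)\log(1+\sqrt2). \]
   Context: For a number field $L$, let $\mathcal{A}_L$ be its set of Archimedean places. Define $\operatorname{LOG}:\mathcal{O}_L^* \to \mathbb{R}^{\mathcal{A}_L}$ by $(\operatorname{LOG}(\gamma))_v = e_v \log|\gamma|_v$, where $e_v=1$ if $v$ is real and $e_v=2$ if $v$ is complex. Let $\{\delta^v\}$ be the standard orthonormal basis of $\mathbb{R}^{\mathcal{A}_L}$; for each $2$-element subset $I=\{v_1,v_2\}$ of $\mathcal{A}_L$ (with a fixed ordering) put $\delta^I=\delta^{v_1}\wedge\delta^{v_2}$. For $w=\sum_I c_I\delta^I\in\bigwedge^2\mathbb{R}^{\mathcal{A}_L}$, $\|w\|_1=\sum_I|c_I|$. The fundamental unit $u_K>1$ of a real quadratic subfield $K$ (with $L$ embedded in $\mathbb{R}$) generates the units of $K$ modulo $\pm1$. $\bigwedge^2\operatorname{LOG}(E)$ is the subgroup of $\bigwedge^2\mathbb{R}^{\mathcal{A}_L}$ generated by $\operatorname{LOG}(\epsilon_1)\wedge\operatorname{LOG}(\epsilon_2)$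 for $\epsilon_1,\epsilon_2\in E$. *)

theory Defs
  imports "HOL-Analysis.Analysis" "HOL-Computational_Algebra.Polynomial"
          "HOL-Algebra.Product_Groups" "HOL-Algebra.Elementary_Groups" "HOL-Library.Function_Algebras"
begin

definition real_subfield :: "real set \<Rightarrow> bool" where
  "real_subfield K \<longleftrightarrow> 0 \<in> K \<and> 1 \<in> K \<and>
     (\<forall>x\<in>K. \<forall>y\<in>K. x + y \<in> K \<and> x - y \<in> K \<and> x * y \<in> K) \<and>
     (\<forall>x\<in>K. x \<noteq> 0 \<longrightarrow> inverse x \<in> K)"

definition rat_scale :: "rat \<Rightarrow> real \<Rightarrow> real" where
  "rat_scale r x = of_rat r * x"

definition field_degree :: "real set \<Rightarrow> nat" where
  "field_degree K = vector_space.dim rat_scale K"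

definition number_field :: "real set \<Rightarrow> bool" where
  "number_field K \<longleftrightarrow> real_subfield K \<and>
     (\<exists>B. finite B \<and> module.independent rat_scale B \<and> module.span rat_scale B = K)"

definition embeddings :: "real set \<Rightarrow> (real \<Rightarrow> complex) set" where
  "embeddings K = {\<sigma>. \<sigma> 1 = 1 \<and>
      (\<forall>x\<in>K. \<forall>y\<in>K. \<sigma> (x + y) = \<sigma> x + \<sigma> y \<and> \<sigma> (x * y) = \<sigma> x * \<sigma> y) \<and>
      (\<forall>x. x \<notin> K \<longrightarrow> \<sigma> x = 0)}"

definition totally_real :: "real set \<Rightarrow> bool" where
  "totally_real K \<longleftrightarrow> (\<forall>\<sigma>\<in>embeddings K. \<forall>x\<in>K. \<sigma> x \<in> \<real>)"

text \<open>Automorphisms of K (automatically fixing Q), extensional.\<close>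
definition automorphisms :: "real set \<Rightarrow> (real \<Rightarrow> real) set" where
  "automorphisms K = {\<sigma>. \<sigma> 1 = 1 \<and>
      (\<forall>x\<in>K. \<forall>y\<in>K. \<sigma> (x + y) = \<sigma> x + \<sigma> y \<and> \<sigma> (x * y) = \<sigma> x * \<sigma> y) \<and>
      bij_betw \<sigma> K K \<and> (\<forall>x. x \<notin> K \<longrightarrow> \<sigma> x = 0)}"

definition galois_group :: "real set \<Rightarrow> (real \<Rightarrow> real) monoid" where
  "galois_group K = \<lparr>carrier = automorphisms K,
      monoid.mult = (\<lambda>\<sigma> \<tau>. \<lambda>x. if x \<in> K then \<sigma> (\<tau> x) else 0),
      one = (\<lambda>x. if x \<in> K then x else 0)\<rparr>"

definition galois_over_Q :: "real set \<Rightarrow> bool" where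
  "galois_over_Q K \<longleftrightarrow> card (automorphisms K) = field_degree K"

definition Z2_power :: "nat \<Rightarrow> (nat \<Rightarrow> int) monoid" where
  "Z2_power n = product_group {..<n} (\<lambda>_. integer_mod_group 2)"

definition units_of_ring_of_integers :: "real set \<Rightarrow> real set" where
  "units_of_ring_of_integers K =
     {x \<in> K. x \<noteq> 0 \<and> algebraic_int x \<and> algebraic_int (inverse x)}"

definition quadratic_subfield :: "real set \<Rightarrow> real set \<Rightarrow> bool" where
  "quadratic_subfield L K \<longleftrightarrow> real_subfield K \<and> K \<subseteq> L \<and> field_degree K = 2"

definition fundamental_unit :: "real set \<Rightarrow> real \<Rightarrow> bool" where
  "fundamental_unit K u \<longleftrightarrow> u \<in> units_of_ring_of_integers K \<and> u > 1 \<and>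
     (\<forall>e\<in>units_of_ring_of_integers K. \<exists>k::int. e = u powi k \<or> e = - (u powi k))"

inductive_set mult_subgroup_gen :: "real set \<Rightarrow> real set" for S where
  one: "1 \<in> mult_subgroup_gen S"
| gen: "s \<in> S \<Longrightarrow> s \<in> mult_subgroup_gen S"
| mult: "x \<in> mult_subgroup_gen S \<Longrightarrow> y \<in> mult_subgroup_gen S \<Longrightarrow> x * y \<in> mult_subgroup_gen S"
| inv: "x \<in> mult_subgroup_gen S \<Longrightarrow> inverse x \<in> mult_subgroup_gen S"

definition fundamental_unit_group :: "real set \<Rightarrow> real set" where
  "fundamental_unit_group L =
     mult_subgroup_gen {u. \<exists>K. quadratic_subfield L K \<and> fundamental_unit K u}"

text \<open>A place is the set {sigma, conj o sigma} of embeddings inducing it.\<close>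
definition arch_places :: "real set \<Rightarrow> (real \<Rightarrow> complex) set set" where
  "arch_places K = (\<lambda>\<sigma>. {\<sigma>, cnj \<circ> \<sigma>}) ` embeddings K"

definition place_e :: "(real \<Rightarrow> complex) set \<Rightarrow> real" where
  "place_e v = (if card v = 1 then 1 else 2)"

definition LOG :: "real set \<Rightarrow> real \<Rightarrow> (real \<Rightarrow> complex) set \<Rightarrow> real" where
  "LOG K \<gamma> v = (if v \<in> arch_places K then place_e v * ln (cmod ((SOME \<sigma>. \<sigma> \<in> v) \<gamma>)) else 0)"

text \<open>An element sum_I c_I delta^I of Lambda^2 R^A is represented by the antisymmetric
  coefficient function c(v1,v2) = c_{v1,v2} = - c(v2,v1) (zero on the diagonal).\<close>
definition wedge :: "('p \<Rightarrow> real) \<Rightarrow> ('p \<Rightarrow> real) \<Rightarrow> ('p \<Rightarrow> 'p \<Rightarrow> real)" where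
  "wedge a b = (\<lambda>v1 v2. a v1 * b v2 - a v2 * b v1)"

text \<open>||w||_1 = sum over 2-element subsets I of |c_I| = half of the sum over ordered pairs.\<close>
definition wedge_norm1 :: "'p set \<Rightarrow> ('p \<Rightarrow> 'p \<Rightarrow> real) \<Rightarrow> real" where
  "wedge_norm1 A w = (\<Sum>v1\<in>A. \<Sum>v2\<in>A. \<bar>w v1 v2\<bar>) / 2"

inductive_set add_subgroup_gen :: "('p \<Rightarrow> 'p \<Rightarrow> real) set \<Rightarrow> ('p \<Rightarrow> 'p \<Rightarrow> real) set" for S where
  zero: "0 \<in> add_subgroup_gen S"
| gen: "s \<in> S \<Longrightarrow> s \<in> add_subgroup_gen S"
| add: "x \<in> add_subgroup_gen S \<Longrightarrow> y \<in> add_subgroup_gen S \<Longrightarrow> x + y \<in> add_subgroup_gen S"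
| neg: "x \<in> add_subgroup_gen S \<Longrightarrow> - x \<in> add_subgroup_gen S"

definition wedge2_LOG :: "real set \<Rightarrow> real set \<Rightarrow> ((real \<Rightarrow> complex) set \<Rightarrow> (real \<Rightarrow> complex) set \<Rightarrow> real) set" where
  "wedge2_LOG L E = add_subgroup_gen {wedge (LOG L e1) (LOG L e2) | e1 e2. e1 \<in> E \<and> e2 \<in> E}"

end

theory Submission
  imports Defs
begin

(* Every embedding of L sends a fundamental unit u of a quadratic subfield to u or to its conjugate
   +-1/u, so LOG(u) = log u * s_u for a sign vector s_u on the places. For distinct fundamental units
   u, u' the product s_u * s_u' is the character of y * y', where y, y' are square roots of the two
   discriminants; y * y' is irrational with rational square, so some Galois automorphism negates it,
   and the sign vectors are orthogonal of squared length N = [L:Q]. Hence pairing w with the wedge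
   of s_u and s_u' gives an integer multiple of 2 N^2 log u log u', and some such pairing is nonzero,
   for otherwise w would be orthogonal to itself. The pairing is at most 4 ||w||_1, and
   log u log u' >= log((1 + sqrt 5)/2) log(1 + sqrt 2) because the golden ratio is the only real
   quadratic unit below 1 + sqrt 2. Finally N = 2^n. *)

section \<open>Real embeddings of subfields of the reals\<close>

definition real_embedding :: "real set \<Rightarrow> (real \<Rightarrow> real) \<Rightarrow> bool" where
  "real_embedding K \<rho> \<longleftrightarrow> \<rho> 1 = 1 \<and>
     (\<forall>x\<in>K. \<forall>y\<in>K. \<rho> (x + y) = \<rho> x + \<rho> y \<and> \<rho> (x * y) = \<rho> x * \<rho> y) \<and>
     (\<forall>x. x \<notin> K \<longrightarrow> \<rho> x = 0)"

context
  fixes K assumes K: "real_subfield K"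
begin

lemma subfield_0: "0 \<in> K" and subfield_1: "1 \<in> K"
  using K by (auto simp: real_subfield_def)

lemma subfield_add: "x \<in> K \<Longrightarrow> y \<in> K \<Longrightarrow> x + y \<in> K"
  and subfield_diff: "x \<in> K \<Longrightarrow> y \<in> K \<Longrightarrow> x - y \<in> K"
  and subfield_mult: "x \<in> K \<Longrightarrow> y \<in> K \<Longrightarrow> x * y \<in> K"
  using K by (auto simp: real_subfield_def)

lemma subfield_inverse: "x \<in> K \<Longrightarrow> inverse x \<in> K"
  using K by (cases "x = 0") (auto simp: real_subfield_def)

lemma subfield_minus: "x \<in> K \<Longrightarrow> - x \<in> K"
  using subfield_diff[of 0 x] subfield_0 by simp

lemma subfield_divide: "x \<in> K \<Longrightarrow> y \<in> K \<Longrightarrow> x / y \<in> K"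
  by (simp add: divide_inverse subfield_mult subfield_inverse)

lemma subfield_of_nat: "of_nat n \<in> K"
  by (induction n) (auto simp: subfield_0 subfield_1 subfield_add)

lemma subfield_of_int: "of_int k \<in> K"
  using subfield_of_nat[of "nat k"] subfield_minus[OF subfield_of_nat[of "nat (- k)"]]
  by (cases "k \<ge> 0") simp_all

lemma subfield_Rats: "x \<in> \<rat> \<Longrightarrow> x \<in> K"
  by (erule Rats_cases') (auto intro!: subfield_divide subfield_of_int)

lemma subfield_power: "x \<in> K \<Longrightarrow> x ^ n \<in> K"
  by (induction n) (auto simp: subfield_1 subfield_mult)

lemma subfield_sum: "(\<And>a. a \<in> A \<Longrightarrow> f a \<in> K) \<Longrightarrow> sum f A \<in> K"
  by (induction A rule: infinite_finite_induct) (auto simp: subfield_0 subfield_add)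

context
  fixes \<rho> assumes \<rho>: "real_embedding K \<rho>"
begin

lemma embedding_1: "\<rho> 1 = 1"
  and embedding_add: "x \<in> K \<Longrightarrow> y \<in> K \<Longrightarrow> \<rho> (x + y) = \<rho> x + \<rho> y"
  and embedding_mult: "x \<in> K \<Longrightarrow> y \<in> K \<Longrightarrow> \<rho> (x * y) = \<rho> x * \<rho> y"
  and embedding_outside: "x \<notin> K \<Longrightarrow> \<rho> x = 0"
  using \<rho> by (auto simp: real_embedding_def)

lemma embedding_0: "\<rho> 0 = 0"
  using embedding_add[OF subfield_0 subfield_0] by simp

lemma embedding_minus: "x \<in> K \<Longrightarrow> \<rho> (- x) = - \<rho> x"
  using embedding_add[OF _ subfield_minus, of x x] embedding_0 by (simp add: eq_neg_iff_add_eq_0)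

lemma embedding_diff: "x \<in> K \<Longrightarrow> y \<in> K \<Longrightarrow> \<rho> (x - y) = \<rho> x - \<rho> y"
  using embedding_add[OF _ subfield_minus, of x y] embedding_minus[of y] by simp

lemma embedding_of_nat: "\<rho> (of_nat n) = of_nat n"
  by (induction n) (auto simp: embedding_0 embedding_1 embedding_add[OF subfield_1 subfield_of_nat])

lemma embedding_of_int: "\<rho> (of_int k) = of_int k"
  using embedding_of_nat[of "nat k"] embedding_of_nat[of "nat (- k)"]
    embedding_minus[OF subfield_of_nat[of "nat (- k)"]]
  by (cases "k \<ge> 0") simp_all

lemma embedding_inverse:
  assumes "x \<in> K" "x \<noteq> 0"
  shows "\<rho> (inverse x) = inverse (\<rho> x)" and "\<rho> x \<noteq> 0"
proof -
  have "\<rho> x * \<rho> (inverse x) = 1"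
    using embedding_mult[OF assms(1) subfield_inverse[OF assms(1)]] assms embedding_1 by simp
  then show "\<rho> (inverse x) = inverse (\<rho> x)" "\<rho> x \<noteq> 0"
    by (auto simp: inverse_unique)
qed

lemma embedding_divide: "x \<in> K \<Longrightarrow> y \<in> K \<Longrightarrow> \<rho> (x / y) = \<rho> x / \<rho> y"
  by (cases "y = 0")
    (auto simp: divide_inverse embedding_mult[OF _ subfield_inverse] embedding_inverse embedding_0)

lemma embedding_Rats: "x \<in> \<rat> \<Longrightarrow> \<rho> x = x"
  by (erule Rats_cases') (auto simp: embedding_divide subfield_of_int embedding_of_int)

lemma embedding_power: "x \<in> K \<Longrightarrow> \<rho> (x ^ n) = \<rho> x ^ n"
  by (induction n) (auto simp: embedding_1 embedding_mult subfield_power)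

lemma embedding_sum:
  "finite A \<Longrightarrow> (\<And>a. a \<in> A \<Longrightarrow> f a \<in> K) \<Longrightarrow> \<rho> (sum f A) = (\<Sum>a\<in>A. \<rho> (f a))"
  by (induction A rule: finite_induct) (auto simp: embedding_0 embedding_add subfield_sum)

lemma embedding_rat_mult: "x \<in> K \<Longrightarrow> \<rho> (of_rat r * x) = of_rat r * \<rho> x"
  by (simp add: embedding_mult subfield_Rats embedding_Rats)

end

end

lemma real_embedding_eqI:
  "real_embedding K \<rho> \<Longrightarrow> real_embedding K \<tau> \<Longrightarrow> (\<And>x. x \<in> K \<Longrightarrow> \<rho> x = \<tau> x) \<Longrightarrow> \<rho> = \<tau>"
  by (rule ext) (metis real_embedding_def)

lemma real_embedding_comp:
  assumes K: "real_subfield K" and \<rho>: "real_embedding K \<rho>" and \<tau>: "real_embedding K \<tau>"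
    and \<tau>K: "\<tau> ` K \<subseteq> K"
  shows "real_embedding K (\<rho> \<circ> \<tau>)"
  unfolding real_embedding_def
  using embedding_1[OF K \<rho>] embedding_1[OF K \<tau>] embedding_0[OF K \<rho>]
    embedding_outside[OF K \<tau>] embedding_add[OF K \<rho>] embedding_add[OF K \<tau>]
    embedding_mult[OF K \<rho>] embedding_mult[OF K \<tau>] \<tau>K
  by (auto simp: image_subset_iff)

lemma two_mult_diff_of_int_mem_iff:
  assumes K: "real_subfield K"
  shows "2 * u - of_int A \<in> K \<longleftrightarrow> u \<in> K"
proof
  have "2 \<in> K" using subfield_of_int[OF K, of 2] by simp
  assume "2 * u - of_int A \<in> K"
  then have "(2 * u - of_int A + of_int A) / 2 \<in> K"
    using subfield_add[OF K] subfield_divide[OF K] subfield_of_int[OF K] \<open>2 \<in> K\<close> by blast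
  then show "u \<in> K" by simp
next
  have "2 \<in> K" using subfield_of_int[OF K, of 2] by simp
  assume "u \<in> K"
  then show "2 * u - of_int A \<in> K"
    using subfield_diff[OF K] subfield_mult[OF K] subfield_of_int[OF K] \<open>2 \<in> K\<close> by blast
qed

lemma subfield_mem_if_mult_rational:
  assumes K: "real_subfield K" and "y \<in> K" "y \<noteq> 0" "y * y' \<in> \<rat>"
  shows "y' \<in> K"
proof -
  have "y' = (y * y') * inverse y" using assms(3) by simp
  also have "\<dots> \<in> K"
    using assms(2,4) subfield_mult[OF K] subfield_Rats[OF K] subfield_inverse[OF K] by auto
  finally show ?thesis .
qed

lemma real_embeddings_linearly_independent:
  assumes K: "real_subfield K" and "finite S" and "S \<subseteq> {\<rho>. real_embedding K \<rho>}"
    and "\<forall>x\<in>K. (\<Sum>\<rho>\<in>S. c \<rho> * \<rho> x) = 0"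
  shows "\<forall>\<rho>\<in>S. c \<rho> = 0"
  using assms(2-4)
proof (induction S arbitrary: c rule: finite_induct)
  case empty then show ?case by simp
next
  case (insert \<sigma> S)
  have \<sigma>: "real_embedding K \<sigma>" using insert.prems by auto
  have hyp: "c \<sigma> * \<sigma> x + (\<Sum>\<rho>\<in>S. c \<rho> * \<rho> x) = 0" if "x \<in> K" for x
    using insert.prems(2) that insert.hyps by simp
  have c_S: "c \<tau> = 0" if \<tau>S: "\<tau> \<in> S" for \<tau>
  proof -
    have \<tau>: "real_embedding K \<tau>" using insert.prems \<tau>S by auto
    have "\<tau> \<noteq> \<sigma>" using \<tau>S insert.hyps by auto
    then obtain z where z: "z \<in> K" "\<tau> z \<noteq> \<sigma> z" using real_embedding_eqI[OF \<tau> \<sigma>] by blast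
    \<comment> \<open>Subtracting the relation at \<open>x\<close>, scaled by \<open>\<sigma> z\<close>, from the relation at \<open>z * x\<close> eliminates \<open>\<sigma>\<close>.\<close>
    define c' where "c' \<rho> = c \<rho> * (\<rho> z - \<sigma> z)" for \<rho>
    have "\<forall>x\<in>K. (\<Sum>\<rho>\<in>S. c' \<rho> * \<rho> x) = 0"
    proof
      fix x assume x: "x \<in> K"
      have zx: "(\<Sum>\<rho>\<in>S. c \<rho> * \<rho> z * \<rho> x) = - (c \<sigma> * \<sigma> z * \<sigma> x)"
      proof -
        have "(\<Sum>\<rho>\<in>S. c \<rho> * \<rho> z * \<rho> x) = (\<Sum>\<rho>\<in>S. c \<rho> * \<rho> (z * x))"
          using insert.prems(1) embedding_mult[OF K _ z(1) x] by (auto simp: mult.assoc intro!: sum.cong)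
        also have "\<dots> = - (c \<sigma> * \<sigma> (z * x))"
          using hyp[OF subfield_mult[OF K z(1) x]] by linarith
        finally show ?thesis using embedding_mult[OF K \<sigma> z(1) x] by (simp add: mult.assoc)
      qed
      have "(\<Sum>\<rho>\<in>S. c' \<rho> * \<rho> x) = (\<Sum>\<rho>\<in>S. c \<rho> * \<rho> z * \<rho> x) - \<sigma> z * (\<Sum>\<rho>\<in>S. c \<rho> * \<rho> x)"
        by (simp add: c'_def algebra_simps sum_subtractf sum_distrib_left)
      also have "\<dots> = 0"
      proof -
        have "(\<Sum>\<rho>\<in>S. c \<rho> * \<rho> x) = - (c \<sigma> * \<sigma> x)"
          using hyp[OF x] by linarith
        then show ?thesis using zx by (simp add: algebra_simps)
      qed
      finally show "(\<Sum>\<rho>\<in>S. c' \<rho> * \<rho> x) = 0" .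
    qed
    then have "c' \<tau> = 0" using insert.IH[of c'] insert.prems(1) \<tau>S by auto
    then show ?thesis using z(2) by (simp add: c'_def)
  qed
  then have "c \<sigma> = 0"
    using hyp[OF subfield_1[OF K]] embedding_1[OF K \<sigma>] by simp
  then show ?case using c_S by auto
qed

section \<open>Number fields with a rational basis\<close>

interpretation Q: vector_space rat_scale
  by unfold_locales (auto simp: rat_scale_def algebra_simps of_rat_add of_rat_mult)

definition fun_scale :: "real \<Rightarrow> (real \<Rightarrow> real) \<Rightarrow> real \<Rightarrow> real" where
  "fun_scale r f = (\<lambda>x. r * f x)"

interpretation RF: vector_space fun_scale
  by unfold_locales (auto simp: fun_scale_def fun_eq_iff algebra_simps)

lemma sum_apply: "sum F A x = (\<Sum>a\<in>A. F a x)"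
  by (induction A rule: infinite_finite_induct) auto

locale number_field_basis =
  fixes L B :: "real set"
  assumes subfield: "real_subfield L" and finite_basis: "finite B"
    and independent_basis: "Q.independent B" and span_basis: "Q.span B = L"
begin

definition Emb :: "(real \<Rightarrow> real) set" where
  "Emb = {\<rho>. real_embedding L \<rho>}"

definition coord :: "real \<Rightarrow> real \<Rightarrow> real" where
  "coord b x = of_rat (Q.representation B x b)"

lemma basis_subset: "B \<subseteq> L"
  using span_basis Q.span_superset by blast

lemma field_degree_eq_card_basis: "field_degree L = card B"
  unfolding field_degree_def using Q.dim_span_eq_card_independent[OF independent_basis] span_basis
  by simp

lemma sum_coords: "x \<in> L \<Longrightarrow> (\<Sum>b\<in>B. coord b x * b) = x"
  using Q.sum_representation_eq[OF independent_basis _ finite_basis] span_basis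
  by (auto simp: coord_def rat_scale_def)

lemma embedding_eq_sum_coords:
  assumes \<rho>: "real_embedding L \<rho>"
  shows "\<rho> = (\<Sum>b\<in>B. fun_scale (\<rho> b) (coord b))"
proof
  fix x
  show "\<rho> x = (\<Sum>b\<in>B. fun_scale (\<rho> b) (coord b)) x"
  proof (cases "x \<in> L")
    case True
    have "\<rho> x = \<rho> (\<Sum>b\<in>B. coord b x * b)" using sum_coords[OF True] by simp
    also have "\<dots> = (\<Sum>b\<in>B. \<rho> (coord b x * b))"
      using basis_subset subfield_mult[OF subfield subfield_Rats[OF subfield]]
      by (intro embedding_sum[OF subfield \<rho> finite_basis]) (auto simp: coord_def)
    also have "\<dots> = (\<Sum>b\<in>B. coord b x * \<rho> b)"
      using basis_subset embedding_rat_mult[OF subfield \<rho>]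
      by (intro sum.cong refl) (auto simp: coord_def)
    finally show ?thesis by (simp add: sum_apply fun_scale_def mult.commute)
  next
    case False
    then show ?thesis using embedding_outside[OF subfield \<rho> False] span_basis
      by (simp add: sum_apply fun_scale_def coord_def Q.representation_def)
  qed
qed

lemma Emb_subset_span_coords: "Emb \<subseteq> RF.span (coord ` B)"
proof
  fix \<rho> assume "\<rho> \<in> Emb"
  then have "\<rho> = (\<Sum>b\<in>B. fun_scale (\<rho> b) (coord b))"
    using embedding_eq_sum_coords by (auto simp: Emb_def)
  also have "\<dots> \<in> RF.span (coord ` B)"
    by (intro RF.span_sum RF.span_scale RF.span_base) auto
  finally show "\<rho> \<in> RF.span (coord ` B)" .
qed

lemma independent_Emb: "RF.independent Emb"
  unfolding RF.independent_explicit_finite_subsets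
proof (intro allI impI ballI)
  fix S c \<rho> assume S: "S \<subseteq> Emb" "finite S" and rel: "(\<Sum>\<tau>\<in>S. fun_scale (c \<tau>) \<tau>) = 0"
    and "\<rho> \<in> S"
  have "\<forall>x\<in>L. (\<Sum>\<tau>\<in>S. c \<tau> * \<tau> x) = 0"
    using rel by (auto simp: sum_apply fun_scale_def dest: fun_cong)
  with S \<open>\<rho> \<in> S\<close> show "c \<rho> = 0"
    using real_embeddings_linearly_independent[OF subfield] by (auto simp: Emb_def)
qed

lemma finite_Emb: "finite Emb" and card_Emb_le: "card Emb \<le> field_degree L"
proof -
  have "finite Emb \<and> card Emb \<le> card (coord ` B)"
    using RF.independent_span_bound[OF _ independent_Emb Emb_subset_span_coords] finite_basis by auto
  moreover have "card (coord ` B) \<le> card B" using card_image_le finite_basis by auto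
  ultimately show "finite Emb" "card Emb \<le> field_degree L"
    by (auto simp: field_degree_eq_card_basis)
qed

lemma coords_in_span:
  assumes "S \<subseteq> Emb" "field_degree L \<le> card S"
  shows "coord ` B \<subseteq> RF.span S"
proof
  fix c assume c: "c \<in> coord ` B"
  show "c \<in> RF.span S"
  proof (rule ccontr)
    assume c_S: "c \<notin> RF.span S"
    have "finite S" using assms(1) finite_Emb finite_subset by blast
    have "RF.independent (insert c S)"
      using RF.independent_insertI[OF c_S RF.independent_mono[OF independent_Emb assms(1)]] .
    moreover have "insert c S \<subseteq> RF.span (coord ` B)"
      using assms(1) Emb_subset_span_coords c RF.span_base by blast
    ultimately have "card (insert c S) \<le> card (coord ` B)"
      using RF.independent_span_bound finite_basis by blast
    also have "\<dots> \<le> card B" using card_image_le finite_basis by auto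
    also have "\<dots> \<le> card S" using assms(2) by (simp add: field_degree_eq_card_basis)
    finally show False
      using \<open>finite S\<close> c_S RF.span_base[of c S] by (auto simp: card_insert_if split: if_splits)
  qed
qed

text \<open>Artin's argument: multiplication by \<open>Y\<close> commutes with the embeddings in \<open>S\<close>, hence with
  everything in their span, which contains the coordinate functions; so \<open>Y = coord b Y / coord b 1\<close>.\<close>

lemma rational_if_fixed_by_embeddings:
  assumes S: "S \<subseteq> Emb" "field_degree L \<le> card S" and Y: "Y \<in> L" "\<forall>\<tau>\<in>S. \<tau> Y = Y"
  shows "Y \<in> \<rat>"
proof -
  define W where "W = {g. \<forall>x\<in>L. g (Y * x) = Y * g x}"
  have "RF.subspace W"
    unfolding RF.subspace_def W_def by (auto simp: fun_scale_def algebra_simps)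
  moreover have "S \<subseteq> W"
  proof
    fix \<tau> assume "\<tau> \<in> S"
    then have \<tau>: "real_embedding L \<tau>" and \<tau>Y: "\<tau> Y = Y" using S Y(2) by (auto simp: Emb_def)
    have "\<tau> (Y * x) = Y * \<tau> x" if "x \<in> L" for x
      using embedding_mult[OF subfield \<tau> Y(1) that] unfolding \<tau>Y .
    then show "\<tau> \<in> W" by (simp add: W_def)
  qed
  ultimately have "RF.span S \<subseteq> W" using RF.span_minimal by blast
  then have coord_W: "coord b (Y * x) = Y * coord b x" if "b \<in> B" "x \<in> L" for b x
    using coords_in_span[OF S] that unfolding W_def by blast
  have "(\<Sum>b\<in>B. coord b 1 * b) \<noteq> 0"
    using sum_coords[OF subfield_1[OF subfield]] by simp
  then obtain b where b: "b \<in> B" "coord b 1 \<noteq> 0"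
    using sum.neutral by force
  have "coord b Y / coord b 1 = Y"
    using coord_W[OF b(1) subfield_1[OF subfield]] b(2) by simp
  moreover have "coord b Y / coord b 1 \<in> \<rat>"
    by (simp add: coord_def)
  ultimately show ?thesis by simp
qed

end

section \<open>Quadratic irrationalities\<close>

lemma map_poly_of_rat_add:
  "map_poly (of_rat :: rat \<Rightarrow> real) (p + q) = map_poly of_rat p + map_poly of_rat q"
  by (rule poly_eqI) (simp add: coeff_map_poly of_rat_add)

lemma map_poly_of_rat_mult:
  "map_poly (of_rat :: rat \<Rightarrow> real) (p * q) = map_poly of_rat p * map_poly of_rat q"
  by (rule poly_eqI) (simp add: coeff_map_poly coeff_mult of_rat_sum of_rat_mult)

lemma map_poly_of_int_mult:
  "map_poly (of_int :: int \<Rightarrow> rat) (p * q) = map_poly of_int p * map_poly of_int q"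
  by (rule poly_eqI) (simp add: coeff_map_poly coeff_mult)

lemma map_poly_of_int_eq_iff:
  "map_poly (of_int :: int \<Rightarrow> rat) p = map_poly of_int q \<longleftrightarrow> p = q"
  by (metis coeff_map_poly of_int_0 of_int_eq_iff poly_eqI)

lemma rat_poly_clear_denominators:
  "\<exists>d::int. d > 0 \<and> (\<exists>p. map_poly of_int p = smult (of_int d) (q :: rat poly))"
proof (induction q)
  case 0 then show ?case by (intro exI[of _ 1]) (auto intro!: exI[of _ 0])
next
  case (pCons c q)
  then obtain d p where dp: "d > 0" "map_poly of_int p = smult (of_int d) q" by blast
  obtain n k where "quotient_of c = (n, k)" by (cases "quotient_of c")
  then have k: "k > 0" "c = of_int n / of_int k" using quotient_of_denom_pos quotient_of_div by auto
  show ?case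
  proof (intro exI conjI)
    show "d * k > 0" using dp k by simp
    show "map_poly of_int (pCons (d * n) (smult k p)) = smult (of_int (d * k)) (pCons c q)"
      using dp k by (simp add: map_poly_pCons map_poly_smult field_simps)
  qed
qed

lemma content_eq_1_if_monic: "lead_coeff (p :: int poly) = 1 \<Longrightarrow> content p = 1"
  using content_dvd_coeff[of p "degree p"] is_unit_content_iff[of p] by simp

text \<open>After clearing denominators \<open>d1\<close>, \<open>d2\<close> of the two factors, the product of the
  contents of the integral factors is \<open>d1 * d2\<close>; each content divides its denominator, so the
  first content is \<open>d1\<close>, i.e. \<open>d1\<close> divides every coefficient.\<close>

lemma monic_factor_of_monic_int_poly_integral:
  fixes p :: "int poly" and m q :: "rat poly"
  assumes p: "lead_coeff p = 1" and m: "lead_coeff m = 1" and pmq: "map_poly of_int p = m * q"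
  shows "coeff m i \<in> \<int>"
proof -
  have q: "lead_coeff q = 1"
    using arg_cong[OF pmq, of lead_coeff] p m by (simp add: lead_coeff_mult degree_map_poly coeff_map_poly)
  obtain d1 M where d1: "d1 > 0" "map_poly of_int M = smult (of_int d1) m"
    using rat_poly_clear_denominators by blast
  obtain d2 Q where d2: "d2 > 0" "map_poly of_int Q = smult (of_int d2) q"
    using rat_poly_clear_denominators by blast
  have "map_poly of_int (M * Q) = map_poly (of_int :: int \<Rightarrow> rat) (smult (d1 * d2) p)"
    by (simp add: map_poly_of_int_mult d1 d2 map_poly_smult pmq mult_ac)
  then have "M * Q = smult (d1 * d2) p" by (simp only: map_poly_of_int_eq_iff)
  from arg_cong[OF this, of content] have content_MQ: "content M * content Q = d1 * d2"
    using d1 d2 by (simp add: content_mult content_eq_1_if_monic[OF p])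
  have coeff_M: "of_int (coeff M i) = of_int d1 * coeff m i" for i
    using arg_cong[OF d1(2), of "\<lambda>p. coeff p i"] by (simp add: coeff_map_poly)
  have coeff_Q: "of_int (coeff Q i) = of_int d2 * coeff q i" for i
    using arg_cong[OF d2(2), of "\<lambda>p. coeff p i"] by (simp add: coeff_map_poly)
  have "content M dvd d1"
    using coeff_M[of "degree m"] m content_dvd_coeff[of M "degree m"] by simp
  moreover have "content Q dvd d2"
    using coeff_Q[of "degree q"] q content_dvd_coeff[of Q "degree q"] by simp
  moreover have "content M \<ge> 0" "content Q \<ge> 0"
    by (metis abs_ge_zero normalize_content normalize_int_def)+
  ultimately have "content M \<le> d1" "content Q \<le> d2"
    using d1 d2 by (auto intro: zdvd_imp_le)
  have "content M = d1"
  proof (rule ccontr)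
    assume "content M \<noteq> d1"
    then have "content M < d1" using \<open>content M \<le> d1\<close> by simp
    have "content M * content Q \<le> content M * d2"
      using \<open>content Q \<le> d2\<close> \<open>content M \<ge> 0\<close> by (rule mult_left_mono)
    also have "\<dots> < d1 * d2" using \<open>content M < d1\<close> d2(1) by (rule mult_strict_right_mono)
    finally show False using content_MQ by simp
  qed
  then have "d1 dvd coeff M i" using content_dvd_coeff[of M i] by simp
  then obtain k where "coeff M i = d1 * k" by (rule dvdE)
  then have "coeff m i = of_int k"
    using coeff_M[of i] d1 by (simp add: mult_left_cancel)
  then show ?thesis by simp
qed

lemma rat_poly_degree_le_1_irrational_root:
  fixes x :: real
  assumes "degree r \<le> 1" "poly (map_poly of_rat r) x = 0" "x \<notin> \<rat>"
  shows "r = 0"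
proof -
  define c0 c1 where "c0 = coeff r 0" and "c1 = coeff r 1"
  have r: "r = [:c0, c1:]"
    unfolding c0_def c1_def using assms(1)
    by (intro poly_eqI) (auto simp: coeff_pCons coeff_eq_0 split: nat.splits)
  have root: "of_rat c0 + of_rat c1 * x = 0"
    using assms(2) unfolding r by (simp add: map_poly_pCons mult.commute)
  have "c1 = 0"
  proof (rule ccontr)
    assume "c1 \<noteq> 0"
    then have "x = - of_rat c0 / of_rat c1" using root by (simp add: field_simps)
    then show False using assms(3) by (simp add: Rats_divide)
  qed
  with root r show ?thesis by simp
qed

lemma algebraic_int_quadratic_relation_integral:
  fixes x :: real and a b :: rat
  assumes x: "algebraic_int x" "x \<notin> \<rat>" and rel: "x\<^sup>2 = of_rat a * x + of_rat b"
  shows "a \<in> \<int>" "b \<in> \<int>"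
proof -
  obtain p where p: "poly (map_poly of_int p) x = 0" "lead_coeff p = 1"
    using algebraic_int_altdef_ipoly x(1) by blast
  define m :: "rat poly" where "m = [:-b, -a, 1:]"
  define P :: "rat poly" where "P = map_poly of_int p"
  have m_root: "poly (map_poly of_rat m) x = 0"
    using rel by (simp add: m_def map_poly_pCons of_rat_minus power2_eq_square algebra_simps)
  have "map_poly (of_rat :: rat \<Rightarrow> real) P = map_poly of_int p"
    by (simp add: P_def map_poly_map_poly o_def)
  then have "poly (map_poly of_rat (P div m * m + P mod m)) x = 0"
    using p(1) by simp
  then have "poly (map_poly of_rat (P mod m)) x = 0"
    using m_root by (simp only: map_poly_of_rat_add map_poly_of_rat_mult poly_add poly_mult)
  moreover have "degree (P mod m) \<le> 1"
    using degree_mod_less'[of m P] by (cases "P mod m = 0") (auto simp: m_def)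
  ultimately have "P mod m = 0"
    using x(2) rat_poly_degree_le_1_irrational_root by blast
  then have "map_poly of_int p = m * (P div m)"
    using div_mult_mod_eq[of P m] by (simp add: P_def mult.commute)
  then have "coeff m i \<in> \<int>" for i
    using monic_factor_of_monic_int_poly_integral[OF p(2)] by (simp add: m_def)
  from this[of 0] this[of 1] show "a \<in> \<int>" "b \<in> \<int>"
    by (simp_all add: m_def)
qed

lemma quadratic_relation_if_degree_2:
  assumes K: "real_subfield K" "field_degree K = 2" and u: "u \<in> K" "u \<notin> \<rat>"
  shows "\<exists>a b :: rat. u\<^sup>2 = of_rat a * u + of_rat b"
proof -
  have "u \<noteq> 1" "u \<noteq> 0" "u\<^sup>2 \<noteq> u" "u\<^sup>2 \<noteq> 1"
    using u(2) power2_eq_1_iff[of u] by (auto simp: power2_eq_square)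
  then have card_S: "card {1, u, u\<^sup>2} = 3" by simp
  obtain C where C: "C \<subseteq> K" "K \<subseteq> Q.span C" "card C = 2"
    using Q.basis_exists[of K] K(2) by (metis field_degree_def)
  have "{1, u, u\<^sup>2} \<subseteq> K"
    using u(1) subfield_1[OF K(1)] subfield_power[OF K(1) u(1)] by auto
  moreover have "finite C" using C(3) card.infinite by force
  ultimately have "Q.dependent {1, u, u\<^sup>2}"
    using Q.independent_span_bound[of C "{1, u, u\<^sup>2}"] C card_S by auto
  then obtain c where c: "\<exists>v\<in>{1, u, u\<^sup>2}. c v \<noteq> 0" "(\<Sum>v\<in>{1, u, u\<^sup>2}. rat_scale (c v) v) = 0"
    using Q.dependent_finite[of "{1, u, u\<^sup>2}"] by blast
  have rel: "of_rat (c 1) + of_rat (c u) * u + of_rat (c (u\<^sup>2)) * u\<^sup>2 = 0"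
    using c(2) \<open>u \<noteq> 1\<close> \<open>u\<^sup>2 \<noteq> u\<close> \<open>u\<^sup>2 \<noteq> 1\<close> by (simp add: rat_scale_def add.assoc)
  have "c (u\<^sup>2) \<noteq> 0"
  proof
    assume "c (u\<^sup>2) = 0"
    then have "poly (map_poly of_rat [:c 1, c u:]) u = 0"
      using rel by (simp add: map_poly_pCons mult.commute)
    then have "c 1 = 0 \<and> c u = 0"
      using rat_poly_degree_le_1_irrational_root[OF _ _ u(2), of "[:c 1, c u:]"] by simp
    then show False using c(1) \<open>c (u\<^sup>2) = 0\<close> by auto
  qed
  then have "u\<^sup>2 = of_rat (- c u / c (u\<^sup>2)) * u + of_rat (- c 1 / c (u\<^sup>2))"
    using rel by (simp add: of_rat_divide of_rat_minus field_simps)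
  then show ?thesis by blast
qed

lemma two_mult_diff_of_int_nonzero:
  fixes v :: real
  assumes "v \<notin> \<rat>"
  shows "2 * v - of_int D \<noteq> 0"
proof
  assume "2 * v - of_int D = 0"
  then have "v = of_int D / 2" by simp
  moreover have "(of_int D / 2 :: real) \<in> \<rat>" by (intro Rats_divide) simp_all
  ultimately show False using assms by blast
qed

section \<open>Fundamental units of real quadratic fields\<close>

lemma fundamental_unit_irrational:
  assumes "fundamental_unit K u"
  shows "u \<notin> \<rat>"
proof
  assume "u \<in> \<rat>"
  moreover have "algebraic_int (inverse u)" and u: "u > 1"
    using assms by (auto simp: fundamental_unit_def units_of_ring_of_integers_def)
  ultimately obtain k where k: "inverse u = of_int k"
    using rational_algebraic_int_is_int by (metis Ints_cases Rats_inverse)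
  have "0 < inverse u" "inverse u < 1" using u by (auto simp: inverse_less_1_iff)
  then show False unfolding k by simp
qed

lemma fundamental_unit_quadratic_equation:
  assumes K: "real_subfield K" "field_degree K = 2" and u: "fundamental_unit K u"
  shows "\<exists>A B :: int. (B = 1 \<or> B = -1) \<and> u\<^sup>2 = of_int A * u + of_int B"
proof -
  have "u \<in> K" "u > 1" and int: "algebraic_int u" "algebraic_int (inverse u)"
    using u by (auto simp: fundamental_unit_def units_of_ring_of_integers_def)
  have u_irr: "u \<notin> \<rat>" using fundamental_unit_irrational[OF u] .
  obtain a b where ab: "u\<^sup>2 = of_rat a * u + of_rat b"
    using quadratic_relation_if_degree_2[OF K \<open>u \<in> K\<close> u_irr] by blast
  have "a \<in> \<int>" "b \<in> \<int>" using algebraic_int_quadratic_relation_integral[OF int(1) u_irr ab] .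
  then obtain A B where A: "a = of_int A" and B: "b = of_int B" by (auto elim!: Ints_cases)
  have "b \<noteq> 0"
  proof
    assume "b = 0"
    then have "u = of_rat a" using ab \<open>u > 1\<close> by (simp add: power2_eq_square)
    then show False using u_irr by simp
  qed
  \<comment> \<open>\<open>inverse u\<close> satisfies the reversed equation, so \<open>1 / b\<close> is an integer as well.\<close>
  have "(inverse u)\<^sup>2 = of_rat (- a / b) * inverse u + of_rat (1 / b)"
  proof -
    have "of_rat a * inverse u + of_rat b * (inverse u)\<^sup>2 = (of_rat a * u + of_rat b) * (inverse u)\<^sup>2"
      using \<open>u > 1\<close> by (simp add: power2_eq_square field_simps)
    also have "\<dots> = u\<^sup>2 * (inverse u)\<^sup>2" by (simp only: ab)
    also have "\<dots> = (u * inverse u)\<^sup>2" by (simp only: power_mult_distrib)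
    also have "\<dots> = 1" using \<open>u > 1\<close> by simp
    finally show ?thesis using \<open>b \<noteq> 0\<close> by (simp add: of_rat_divide of_rat_minus field_simps)
  qed
  then have "1 / b \<in> \<int>"
    using algebraic_int_quadratic_relation_integral[OF int(2)] u_irr by (metis Rats_inverse inverse_inverse_eq)
  then obtain C where "1 / b = of_int C" by (auto elim: Ints_cases)
  then have "B * C = 1" using B \<open>b \<noteq> 0\<close> by (simp add: field_simps flip: of_int_mult)
  then have "B = 1 \<or> B = -1" using zmult_eq_1_iff by blast
  moreover have "u\<^sup>2 = of_int A * u + of_int B" using ab A B by simp
  ultimately show ?thesis by blast
qed

lemma quadratic_unit_bounds_plus:
  fixes u :: real and A :: int
  assumes u: "u > 1" and eq: "u\<^sup>2 = of_int A * u + 1"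
  shows "u = (1 + sqrt 5) / 2 \<or> 1 + sqrt 2 \<le> u"
proof -
  \<comment> \<open>\<open>A = u - 1 / u\<close> is a positive integer.\<close>
  have "u\<^sup>2 > 1" using u by (simp add: one_less_power)
  then have "of_int A * u > 0" using eq by linarith
  then have "A > 0" using u by (simp add: zero_less_mult_iff)
  then consider "A = 1" | "A \<ge> 2" by linarith
  then show ?thesis
  proof cases
    case 1
    then have "(2 * u - 1)\<^sup>2 = 5" using eq by (simp add: power2_eq_square algebra_simps)
    then have "sqrt 5 = 2 * u - 1" using u by (intro real_sqrt_unique) auto
    then show ?thesis by simp
  next
    case 2
    then have "of_int A * u \<ge> 2 * u" using u by (intro mult_right_mono) auto
    then have "(u - 1)\<^sup>2 \<ge> 2" using eq by (simp add: power2_eq_square algebra_simps)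
    then have "sqrt 2 \<le> u - 1" using u real_sqrt_le_mono[of 2 "(u - 1)\<^sup>2"] by simp
    then show ?thesis by simp
  qed
qed

lemma quadratic_unit_bounds_minus:
  fixes u :: real and A :: int
  assumes u: "u > 1" and eq: "u\<^sup>2 = of_int A * u - 1"
  shows "1 + sqrt 2 \<le> u"
proof -
  \<comment> \<open>\<open>A = u + 1 / u > 2\<close>, so \<open>A \<ge> 3\<close> and \<open>u \<ge> (3 + sqrt 5) / 2 > 5 / 2\<close>.\<close>
  have "A \<ge> 3"
  proof (rule ccontr)
    assume "\<not> A \<ge> 3"
    then have "of_int A * u \<le> 2 * u" using u by (intro mult_right_mono) auto
    then have "(u - 1)\<^sup>2 \<le> 0" using eq by (simp add: power2_eq_square algebra_simps)
    then show False using u by simp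
  qed
  then have "of_int A * u \<ge> 3 * u" using u by (intro mult_right_mono) auto
  then have "u * u \<ge> 3 * u - 1" using eq by (simp add: power2_eq_square)
  have "u \<ge> 5 / 2"
  proof (rule ccontr)
    assume "\<not> u \<ge> 5 / 2"
    then have "(u - 1) * (u - 5 / 2) < 0" using u by (simp add: mult_pos_neg)
    moreover have "(u - 1) * (u - 5 / 2) = u * u - 7 / 2 * u + 5 / 2" by (simp add: field_simps)
    ultimately show False using \<open>u * u \<ge> 3 * u - 1\<close> \<open>\<not> u \<ge> 5 / 2\<close> by linarith
  qed
  moreover have "sqrt 2 < 3 / 2" by (rule real_less_lsqrt) (auto simp: power2_eq_square)
  ultimately show ?thesis by simp
qed

lemma quadratic_unit_bounds:
  fixes u :: real and A B :: int
  assumes "u > 1" "u\<^sup>2 = of_int A * u + of_int B" "B = 1 \<or> B = -1"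
  shows "u = (1 + sqrt 5) / 2 \<or> 1 + sqrt 2 \<le> u"
  using assms quadratic_unit_bounds_plus[of u A] quadratic_unit_bounds_minus[of u A] by auto

lemma golden_ratio_le_silver_ratio: "(1 + sqrt 5) / 2 \<le> 1 + sqrt 2"
proof -
  have "sqrt 5 < 3" by (rule real_less_lsqrt) auto
  moreover have "1 \<le> sqrt 2" by simp
  ultimately have "sqrt 5 \<le> 1 + 2 * sqrt 2" by linarith
  then show ?thesis by (simp add: field_simps)
qed

lemma ln_golden_ratio_silver_ratio_le:
  assumes "u = (1 + sqrt 5) / 2 \<or> 1 + sqrt 2 \<le> u" "u' = (1 + sqrt 5) / 2 \<or> 1 + sqrt 2 \<le> u'"
    and "u \<noteq> u'"
  shows "ln ((1 + sqrt 5) / 2) * ln (1 + sqrt 2) \<le> ln u * ln u'"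
proof -
  define \<phi> :: real where "\<phi> = (1 + sqrt 5) / 2"
  have u: "u = \<phi> \<or> 1 + sqrt 2 \<le> u" "u' = \<phi> \<or> 1 + sqrt 2 \<le> u'"
    using assms(1,2) by (simp_all add: \<phi>_def)
  have "1 < \<phi>" using real_sqrt_gt_1_iff[of 5] by (simp add: \<phi>_def)
  have "\<phi> \<le> 1 + sqrt 2" using golden_ratio_le_silver_ratio by (simp add: \<phi>_def)
  then have "\<phi> \<le> u" "\<phi> \<le> u'" using u by auto
  then have ln_\<phi>: "0 < ln \<phi>" "ln \<phi> \<le> ln u" "ln \<phi> \<le> ln u'" "ln \<phi> \<le> ln (1 + sqrt 2)"
    using \<open>1 < \<phi>\<close> \<open>\<phi> \<le> 1 + sqrt 2\<close> by auto
  have "1 + sqrt 2 \<le> u \<or> 1 + sqrt 2 \<le> u'" using u assms(3) by auto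
  then have "ln \<phi> * ln (1 + sqrt 2) \<le> ln u * ln u'"
  proof
    assume "1 + sqrt 2 \<le> u"
    then have "ln (1 + sqrt 2) \<le> ln u" by (rule ln_mono) (simp add: add_pos_nonneg)
    then show ?thesis using ln_\<phi> mult_mono[of "ln \<phi>" "ln u'" "ln (1 + sqrt 2)" "ln u"]
      by (simp add: mult.commute)
  next
    assume "1 + sqrt 2 \<le> u'"
    then have "ln (1 + sqrt 2) \<le> ln u'" by (rule ln_mono) (simp add: add_pos_nonneg)
    then show ?thesis using ln_\<phi> mult_mono[of "ln \<phi>" "ln u" "ln (1 + sqrt 2)" "ln u'"] by simp
  qed
  then show ?thesis by (simp add: \<phi>_def)
qed

lemma fundamental_unit_le:
  assumes u: "fundamental_unit K u" and e: "e \<in> units_of_ring_of_integers K" "e > 1"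
  shows "u \<le> e"
proof -
  have "u > 1" using u by (simp add: fundamental_unit_def)
  obtain k :: int where "e = u powi k \<or> e = - (u powi k)"
    using u e(1) by (auto simp: fundamental_unit_def)
  moreover have "u powi k > 0" using \<open>u > 1\<close> by simp
  ultimately have ek: "e = u powi k" using e(2) by auto
  have "1 \<le> k"
  proof (rule ccontr)
    assume "\<not> 1 \<le> k"
    then have "u powi k \<le> u powi 0" using power_int_increasing[of k 0 u] \<open>u > 1\<close> by simp
    then show False using ek e(2) by simp
  qed
  then show ?thesis
    using ek power_int_increasing[OF \<open>1 \<le> k\<close>, of u] \<open>u > 1\<close> by simp
qed

lemma fundamental_unit_unique:
  assumes u: "fundamental_unit K u" and u': "fundamental_unit K' u'" and "u \<in> K'" "u' \<in> K"
  shows "u = u'"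
proof -
  have "u' \<in> units_of_ring_of_integers K" "u \<in> units_of_ring_of_integers K'"
    using u u' assms(3,4) by (auto simp: fundamental_unit_def units_of_ring_of_integers_def)
  then have "u \<le> u'" "u' \<le> u"
    using fundamental_unit_le u u' by (auto simp: fundamental_unit_def)
  then show ?thesis by simp
qed

section \<open>Additive subgroups and pairings on the second exterior power\<close>

definition add_subgroup :: "'a::ab_group_add set \<Rightarrow> bool" where
  "add_subgroup T \<longleftrightarrow> 0 \<in> T \<and> (\<forall>x\<in>T. \<forall>y\<in>T. x + y \<in> T) \<and> (\<forall>x\<in>T. - x \<in> T)"

lemma add_subgroup_zero: "add_subgroup {0}"
  by (simp add: add_subgroup_def)

lemma add_subgroup_int_multiples: "add_subgroup (range (\<lambda>k::int. of_int k * (c :: real)))"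
  unfolding add_subgroup_def
  by (auto simp: image_iff algebra_simps intro: exI[of _ 0] exI[of _ "_ + _"] exI[of _ "- _"])

text \<open>\<open>Modules.additive\<close> is the locale of additive maps; the bare name is shadowed by
  \<open>Measure_Space.additive\<close>.\<close>

lemma add_subgroup_vimage: "Modules.additive f \<Longrightarrow> add_subgroup T \<Longrightarrow> add_subgroup (f -` T)"
  by (simp add: add_subgroup_def additive.zero additive.add additive.minus)

lemma add_subgroup_gen_subset:
  assumes "add_subgroup T" "S \<subseteq> T"
  shows "add_subgroup_gen S \<subseteq> T"
proof
  fix w assume "w \<in> add_subgroup_gen S"
  then show "w \<in> T"
  proof induction
    case zero show ?case using assms(1) unfolding add_subgroup_def by blast
  next
    case (gen s) then show ?case using assms(2) by blast
  next
    case (add x y) then show ?case using assms(1) unfolding add_subgroup_def by blast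
  next
    case (neg x) then show ?case using assms(1) unfolding add_subgroup_def by blast
  qed
qed

lemma mult_subgroup_gen_hom_mem:
  assumes K: "real_subfield K" and S: "S \<subseteq> K - {0}"
    and g: "\<And>x y. x \<in> K - {0} \<Longrightarrow> y \<in> K - {0} \<Longrightarrow> g (x * y) = g x + g y"
    and T: "add_subgroup T" "g ` S \<subseteq> T"
    and e: "e \<in> mult_subgroup_gen S"
  shows "g e \<in> T"
proof -
  have K1: "1 \<in> K - {0}" using subfield_1[OF K] by simp
  have g1: "g 1 = 0" using g[OF K1 K1] by simp
  from e have "e \<in> K - {0} \<and> g e \<in> T"
  proof induction
    case one then show ?case using K1 g1 T(1) by (simp add: add_subgroup_def)
  next
    case (gen s) then show ?case using S T(2) by auto
  next
    case (mult x y) then show ?case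
      using g T(1) subfield_mult[OF K] by (auto simp: add_subgroup_def)
  next
    case (inv x)
    then have x: "x \<in> K - {0}" "inverse x \<in> K - {0}" using subfield_inverse[OF K] by auto
    have "g (inverse x) = - g x" using g[OF x] g1 x by (simp add: eq_neg_iff_add_eq_0 add.commute)
    then show ?case using x inv.IH T(1) by (simp add: add_subgroup_def)
  qed
  then show ?thesis by simp
qed

definition inner_on :: "'p set \<Rightarrow> ('p \<Rightarrow> real) \<Rightarrow> ('p \<Rightarrow> real) \<Rightarrow> real" where
  "inner_on A a b = (\<Sum>v\<in>A. a v * b v)"

definition wedge_inner :: "'p set \<Rightarrow> ('p \<Rightarrow> 'p \<Rightarrow> real) \<Rightarrow> ('p \<Rightarrow> 'p \<Rightarrow> real) \<Rightarrow> real" where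
  "wedge_inner A w z = (\<Sum>v1\<in>A. \<Sum>v2\<in>A. w v1 v2 * z v1 v2)"

lemma wedge_self: "wedge a a = 0"
  by (simp add: wedge_def fun_eq_iff mult.commute)

lemma additive_inner_on_left: "Modules.additive (\<lambda>a. inner_on A a b)"
  by unfold_locales (simp add: inner_on_def distrib_right sum.distrib)

lemma additive_wedge_inner_left: "Modules.additive (\<lambda>w. wedge_inner A w z)"
  by unfold_locales (simp add: wedge_inner_def distrib_right sum.distrib)

lemma additive_wedge_inner_right: "Modules.additive (wedge_inner A w)"
  by unfold_locales (simp add: wedge_inner_def distrib_left sum.distrib)

lemma additive_wedge_inner_wedge_left: "Modules.additive (\<lambda>a. wedge_inner A w (wedge a b))"
  unfolding wedge_inner_def wedge_def
  by unfold_locales (simp add: algebra_simps flip: sum.distrib)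

lemma additive_wedge_inner_wedge_right: "Modules.additive (\<lambda>b. wedge_inner A w (wedge a b))"
  unfolding wedge_inner_def wedge_def
  by unfold_locales (simp add: algebra_simps flip: sum.distrib)

lemma inner_on_scale_left: "inner_on A (\<lambda>v. c * a v) b = c * inner_on A a b"
  by (simp add: inner_on_def sum_distrib_left mult.assoc)

lemma wedge_inner_wedge_scale_left:
  "wedge_inner A w (wedge (\<lambda>v. c * a v) b) = c * wedge_inner A w (wedge a b)"
  by (simp add: wedge_inner_def wedge_def sum_distrib_left algebra_simps)

lemma wedge_inner_wedge_scale_right:
  "wedge_inner A w (wedge a (\<lambda>v. c * b v)) = c * wedge_inner A w (wedge a b)"
  by (simp add: wedge_inner_def wedge_def sum_distrib_left algebra_simps)

lemma wedge_inner_wedge: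
  "wedge_inner A (wedge a b) (wedge c d) =
     2 * (inner_on A a c * inner_on A b d - inner_on A a d * inner_on A b c)"
proof -
  have "wedge_inner A (wedge a b) (wedge c d) =
      (\<Sum>v1\<in>A. \<Sum>v2\<in>A. (a v1 * c v1) * (b v2 * d v2) - (a v1 * d v1) * (b v2 * c v2)
        - (b v1 * c v1) * (a v2 * d v2) + (b v1 * d v1) * (a v2 * c v2))"
    unfolding wedge_inner_def wedge_def by (intro sum.cong refl) (simp add: algebra_simps)
  also have "\<dots> = inner_on A a c * inner_on A b d - inner_on A a d * inner_on A b c
      - inner_on A b c * inner_on A a d + inner_on A b d * inner_on A a c"
    by (simp only: inner_on_def sum.distrib sum_subtractf sum_product)
  finally show ?thesis by (simp add: algebra_simps)
qed

lemma abs_wedge_inner_wedge_le: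
  assumes "\<And>v. \<bar>a v\<bar> \<le> 1" "\<And>v. \<bar>b v\<bar> \<le> 1"
  shows "\<bar>wedge_inner A w (wedge a b)\<bar> \<le> 4 * wedge_norm1 A w"
proof -
  have wedge_le: "\<bar>wedge a b v1 v2\<bar> \<le> 2" for v1 v2
  proof -
    have "\<bar>a v1 * b v2\<bar> \<le> 1" "\<bar>a v2 * b v1\<bar> \<le> 1"
      using assms by (auto simp: abs_mult intro: mult_le_one)
    then show ?thesis unfolding wedge_def by linarith
  qed
  have "\<bar>wedge_inner A w (wedge a b)\<bar> \<le> (\<Sum>v1\<in>A. \<Sum>v2\<in>A. \<bar>w v1 v2 * wedge a b v1 v2\<bar>)"
    unfolding wedge_inner_def by (rule order.trans[OF sum_abs sum_mono[OF sum_abs]])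
  also have "\<dots> \<le> (\<Sum>v1\<in>A. \<Sum>v2\<in>A. \<bar>w v1 v2\<bar> * 2)"
    by (intro sum_mono) (simp add: abs_mult mult_left_mono wedge_le)
  also have "\<dots> = 4 * wedge_norm1 A w"
    by (simp add: wedge_norm1_def sum_distrib_left mult.commute)
  finally show ?thesis .
qed

lemma wedge_inner_self_eq_0D:
  assumes "finite A" "wedge_inner A w w = 0" "v1 \<in> A" "v2 \<in> A"
  shows "w v1 v2 = 0"
proof -
  have "(\<Sum>v1\<in>A. \<Sum>v2\<in>A. (w v1 v2)\<^sup>2) = 0"
    using assms(2) by (simp add: wedge_inner_def power2_eq_square)
  then have "\<forall>v1\<in>A. \<forall>v2\<in>A. (w v1 v2)\<^sup>2 = 0"
    using assms(1) by (simp add: sum_nonneg sum_nonneg_eq_0_iff)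
  then show ?thesis using assms(3,4) by simp
qed

section \<open>Logarithmic embedding of a totally real Galois field\<close>

definition real_place :: "(real \<Rightarrow> real) \<Rightarrow> (real \<Rightarrow> complex) set" where
  "real_place \<rho> = {\<lambda>x. complex_of_real (\<rho> x)}"

definition place_embedding :: "(real \<Rightarrow> complex) set \<Rightarrow> real \<Rightarrow> real" where
  "place_embedding v = (\<lambda>x. Re ((SOME \<sigma>. \<sigma> \<in> v) x))"

lemma place_embedding_real_place [simp]: "place_embedding (real_place \<rho>) = \<rho>"
  by (simp add: place_embedding_def real_place_def)

lemma inj_real_place: "inj real_place"
  by (metis injI place_embedding_real_place)

lemma LOG_outside: "v \<notin> arch_places K \<Longrightarrow> LOG K \<gamma> v = 0"
  by (simp add: LOG_def)

lemma wedge2_LOG_outside: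
  assumes "w \<in> wedge2_LOG K E" "v1 \<notin> arch_places K \<or> v2 \<notin> arch_places K"
  shows "w v1 v2 = 0"
  using assms(1) unfolding wedge2_LOG_def
  by induction (use assms(2) in \<open>auto simp: wedge_def LOG_outside\<close>)

locale totally_real_galois_field = number_field_basis +
  assumes totally_real: "totally_real L" and galois: "galois_over_Q L"
begin

abbreviation P :: "(real \<Rightarrow> complex) set set" where
  "P \<equiv> arch_places L"

lemma embedding_real_part:
  assumes \<sigma>: "\<sigma> \<in> embeddings L"
  shows "\<sigma> = (\<lambda>x. complex_of_real (Re (\<sigma> x)))" and "(\<lambda>x. Re (\<sigma> x)) \<in> Emb"
proof -
  have real: "\<sigma> x \<in> \<real>" for x
    using totally_real \<sigma> by (cases "x \<in> L") (auto simp: totally_real_def embeddings_def)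
  then show "\<sigma> = (\<lambda>x. complex_of_real (Re (\<sigma> x)))" by (simp add: fun_eq_iff)
  have "Re (\<sigma> x * \<sigma> y) = Re (\<sigma> x) * Re (\<sigma> y)" for x y
    using real[of x] real[of y] by (auto elim!: Reals_cases)
  then show "(\<lambda>x. Re (\<sigma> x)) \<in> Emb"
    using \<sigma> by (simp add: Emb_def real_embedding_def embeddings_def)
qed

lemma arch_places_eq: "P = real_place ` Emb"
proof
  show "P \<subseteq> real_place ` Emb"
  proof
    fix v assume "v \<in> P"
    then obtain \<sigma> where \<sigma>: "\<sigma> \<in> embeddings L" "v = {\<sigma>, cnj \<circ> \<sigma>}"
      by (auto simp: arch_places_def)
    have "cnj (\<sigma> x) = \<sigma> x" for x
      using fun_cong[OF embedding_real_part(1)[OF \<sigma>(1)], of x] by (metis complex_cnj_complex_of_real)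
    then have "cnj \<circ> \<sigma> = \<sigma>" by (simp add: fun_eq_iff)
    then have "v = real_place (\<lambda>x. Re (\<sigma> x))"
      using \<sigma> embedding_real_part(1)[OF \<sigma>(1)] by (simp add: real_place_def)
    then show "v \<in> real_place ` Emb" using embedding_real_part(2)[OF \<sigma>(1)] by blast
  qed
next
  show "real_place ` Emb \<subseteq> P"
  proof
    fix v assume "v \<in> real_place ` Emb"
    then obtain \<rho> where \<rho>: "real_embedding L \<rho>" "v = real_place \<rho>" by (auto simp: Emb_def)
    then have "(\<lambda>x. complex_of_real (\<rho> x)) \<in> embeddings L"
      by (auto simp: real_embedding_def embeddings_def)
    moreover have "cnj \<circ> (\<lambda>x. complex_of_real (\<rho> x)) = (\<lambda>x. complex_of_real (\<rho> x))"
      by (simp add: o_def)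
    ultimately show "v \<in> P" using \<rho>(2) by (force simp: arch_places_def real_place_def)
  qed
qed

lemma sum_arch_places: "(\<Sum>v\<in>P. f v) = (\<Sum>\<rho>\<in>Emb. f (real_place \<rho>))"
  unfolding arch_places_eq by (simp add: sum.reindex inj_on_subset[OF inj_real_place])

lemma finite_arch_places: "finite P"
  using finite_Emb by (simp add: arch_places_eq)

lemma card_arch_places: "card P = field_degree L"
proof -
  have "automorphisms L \<subseteq> Emb"
    by (auto simp: automorphisms_def Emb_def real_embedding_def)
  then have "field_degree L \<le> card Emb"
    using galois card_mono[OF finite_Emb] by (metis galois_over_Q_def)
  then show ?thesis
    using card_Emb_le by (simp add: arch_places_eq card_image inj_on_subset[OF inj_real_place])
qed

lemma LOG_real_place: "\<rho> \<in> Emb \<Longrightarrow> LOG L \<gamma> (real_place \<rho>) = ln \<bar>\<rho> \<gamma>\<bar>"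
  using arch_places_eq by (simp add: LOG_def place_e_def real_place_def)

lemma LOG_mult:
  assumes "x \<in> L - {0}" "y \<in> L - {0}"
  shows "LOG L (x * y) = LOG L x + LOG L y"
proof
  fix v show "LOG L (x * y) v = (LOG L x + LOG L y) v"
  proof (cases "v \<in> P")
    case True
    then obtain \<rho> where \<rho>: "\<rho> \<in> Emb" "v = real_place \<rho>" using arch_places_eq by auto
    then have "\<rho> (x * y) = \<rho> x * \<rho> y" "\<rho> x \<noteq> 0" "\<rho> y \<noteq> 0"
      using assms embedding_mult[OF subfield] embedding_inverse(2)[OF subfield]
      by (auto simp: Emb_def)
    then show ?thesis using LOG_real_place[OF \<rho>(1)] \<rho>(2) by (simp add: abs_mult ln_mult)
  qed (simp add: LOG_outside)
qed

definition fundamental_units :: "real set" where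
  "fundamental_units = {u. \<exists>K. quadratic_subfield L K \<and> fundamental_unit K u}"

lemma fundamental_units_mem:
  assumes "u \<in> fundamental_units"
  shows "u \<in> L" "u > 1" "u \<notin> \<rat>"
    and "\<exists>A C :: int. (C = 1 \<or> C = -1) \<and> u\<^sup>2 = of_int A * u + of_int C"
proof -
  obtain K where K: "quadratic_subfield L K" "fundamental_unit K u"
    using assms by (auto simp: fundamental_units_def)
  then show "u \<in> L" "u > 1"
    by (auto simp: quadratic_subfield_def fundamental_unit_def units_of_ring_of_integers_def)
  show "u \<notin> \<rat>" using fundamental_unit_irrational[OF K(2)] .
  show "\<exists>A C :: int. (C = 1 \<or> C = -1) \<and> u\<^sup>2 = of_int A * u + of_int C"
    using K fundamental_unit_quadratic_equation by (auto simp: quadratic_subfield_def)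
qed

lemma LOG_fundamental_unit_group_mem:
  assumes "add_subgroup T" "\<And>u. u \<in> fundamental_units \<Longrightarrow> LOG L u \<in> T"
    and "e \<in> fundamental_unit_group L"
  shows "LOG L e \<in> T"
proof -
  have "fundamental_units \<subseteq> L - {0}"
    using fundamental_units_mem(1,2) by fastforce
  moreover have "e \<in> mult_subgroup_gen fundamental_units"
    using assms(3) by (simp add: fundamental_unit_group_def fundamental_units_def)
  ultimately show ?thesis
    using mult_subgroup_gen_hom_mem[OF subfield _ LOG_mult assms(1)] assms(2) by blast
qed

lemma embedding_quadratic_root:
  assumes "\<rho> \<in> Emb" "u \<in> L" "u\<^sup>2 = of_int A * u + of_int C"
  shows "\<rho> u = u \<or> \<rho> u = of_int A - u"
proof -
  have \<rho>: "real_embedding L \<rho>" using assms(1) by (simp add: Emb_def)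
  have "(\<rho> u)\<^sup>2 = \<rho> (of_int A * u + of_int C)"
    using embedding_power[OF subfield \<rho> assms(2), of 2] unfolding assms(3) by simp
  also have "\<dots> = of_int A * \<rho> u + of_int C"
    using assms(2) subfield_of_int[OF subfield] subfield_mult[OF subfield]
    by (simp add: embedding_add[OF subfield \<rho>] embedding_mult[OF subfield \<rho>] embedding_of_int[OF subfield \<rho>])
  finally have "(\<rho> u - u) * (\<rho> u - (of_int A - u)) = 0"
    using assms(3) by (simp add: algebra_simps power2_eq_square)
  then show ?thesis by simp
qed

definition unit_sign :: "real \<Rightarrow> (real \<Rightarrow> complex) set \<Rightarrow> real" where
  "unit_sign u v = (if v \<in> P then if place_embedding v u = u then 1 else -1 else 0)"

lemma unit_sign_real_place:
  "\<rho> \<in> Emb \<Longrightarrow> unit_sign u (real_place \<rho>) = (if \<rho> u = u then 1 else -1)"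
  by (simp add: unit_sign_def arch_places_eq)

lemma abs_unit_sign_le: "\<bar>unit_sign u v\<bar> \<le> 1"
  by (simp add: unit_sign_def)

lemma LOG_fundamental_unit:
  assumes u: "u \<in> fundamental_units"
  shows "LOG L u = (\<lambda>v. ln u * unit_sign u v)"
proof
  fix v
  obtain A C :: int where C: "C = 1 \<or> C = -1" and eq: "u\<^sup>2 = of_int A * u + of_int C"
    using fundamental_units_mem(4)[OF u] by blast
  have "u > 1" "u \<in> L" using fundamental_units_mem[OF u] by auto
  have "u * (of_int A - u) = - of_int C" using eq by (simp add: algebra_simps power2_eq_square)
  then have "\<bar>u\<bar> * \<bar>of_int A - u\<bar> = 1" using C by (auto simp flip: abs_mult)
  then have conj: "\<bar>of_int A - u\<bar> = 1 / u" using \<open>u > 1\<close> by (simp add: field_simps)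
  show "LOG L u v = ln u * unit_sign u v"
  proof (cases "v \<in> P")
    case True
    then obtain \<rho> where \<rho>: "\<rho> \<in> Emb" "v = real_place \<rho>" using arch_places_eq by auto
    then show ?thesis
      using embedding_quadratic_root[OF \<rho>(1) \<open>u \<in> L\<close> eq] conj \<open>u > 1\<close>
      by (auto simp: LOG_real_place unit_sign_real_place ln_div)
  qed (simp add: LOG_outside unit_sign_def)
qed

text \<open>A Galois automorphism moving an irrational \<open>Y\<close> with \<open>Y\<^sup>2 \<in> \<rat>\<close> sends it to \<open>-Y\<close>;
  composing with it permutes the embeddings, so their sum at \<open>Y\<close> vanishes.\<close>

lemma sum_embeddings_eq_0:
  assumes Y: "Y \<in> L" "Y \<notin> \<rat>" "Y\<^sup>2 \<in> \<rat>"
  shows "(\<Sum>\<rho>\<in>Emb. \<rho> Y) = 0"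
proof -
  have Aut: "automorphisms L \<subseteq> Emb"
    by (auto simp: automorphisms_def Emb_def real_embedding_def)
  then obtain \<tau> where \<tau>: "\<tau> \<in> automorphisms L" "\<tau> Y \<noteq> Y"
    using rational_if_fixed_by_embeddings[of "automorphisms L"] Y galois
    by (auto simp: galois_over_Q_def)
  have \<tau>_emb: "real_embedding L \<tau>" and bij: "bij_betw \<tau> L L"
    using \<tau>(1) Aut by (auto simp: automorphisms_def Emb_def)
  have "(\<tau> Y)\<^sup>2 = Y\<^sup>2"
    using embedding_power[OF subfield \<tau>_emb Y(1)] embedding_Rats[OF subfield \<tau>_emb Y(3)] by simp
  then have \<tau>Y: "\<tau> Y = - Y" using \<tau>(2) by (simp add: power2_eq_iff)
  have comp: "(\<lambda>\<rho>. \<rho> \<circ> \<tau>) ` Emb \<subseteq> Emb"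
    using real_embedding_comp[OF subfield _ \<tau>_emb] bij by (auto simp: Emb_def bij_betw_def)
  have "inj_on (\<lambda>\<rho>. \<rho> \<circ> \<tau>) Emb"
  proof (rule inj_onI)
    fix \<rho> \<rho>' assume "\<rho> \<in> Emb" "\<rho>' \<in> Emb" "\<rho> \<circ> \<tau> = \<rho>' \<circ> \<tau>"
    moreover have "\<rho> x = \<rho>' x" if "x \<in> L" "\<rho> \<circ> \<tau> = \<rho>' \<circ> \<tau>" for x
    proof -
      have "x \<in> \<tau> ` L" using that(1) bij by (simp add: bij_betw_def)
      then obtain z where "x = \<tau> z" by blast
      then show ?thesis using fun_cong[OF that(2), of z] by simp
    qed
    ultimately show "\<rho> = \<rho>'" using real_embedding_eqI by (simp add: Emb_def)
  qed
  then have perm: "(\<lambda>\<rho>. \<rho> \<circ> \<tau>) ` Emb = Emb" using endo_inj_surj[OF finite_Emb comp] by blast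
  have "(\<Sum>\<rho>\<in>Emb. \<rho> Y) = (\<Sum>\<rho>\<in>Emb. (\<rho> \<circ> \<tau>) Y)"
    using sum.reindex[OF \<open>inj_on _ Emb\<close>, of "\<lambda>\<rho>. \<rho> Y"] perm by simp
  also have "\<dots> = (\<Sum>\<rho>\<in>Emb. - \<rho> Y)"
    using embedding_minus[OF subfield _ Y(1)] \<tau>Y by (intro sum.cong) (auto simp: Emb_def)
  also have "\<dots> = - (\<Sum>\<rho>\<in>Emb. \<rho> Y)" by (simp add: sum_negf)
  finally show ?thesis by simp
qed

lemma inner_on_unit_sign_self: "inner_on P (unit_sign u) (unit_sign u) = field_degree L"
proof -
  have "inner_on P (unit_sign u) (unit_sign u) = (\<Sum>v\<in>P. 1)"
    unfolding inner_on_def by (intro sum.cong) (auto simp: unit_sign_def)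
  then show ?thesis by (simp add: card_arch_places)
qed

lemma embedding_discriminant_root:
  assumes "\<rho> \<in> Emb" "v \<in> L" "v\<^sup>2 = of_int C * v + of_int D"
  shows "\<rho> (2 * v - of_int C) = unit_sign v (real_place \<rho>) * (2 * v - of_int C)"
proof -
  have \<rho>: "real_embedding L \<rho>" using assms(1) by (simp add: Emb_def)
  have "2 \<in> L" "(2 :: real) \<in> \<rat>" using subfield_of_int[OF subfield, of 2] by simp_all
  then have "\<rho> (2 * v - of_int C) = 2 * \<rho> v - of_int C"
    using assms(2) subfield_of_int[OF subfield] subfield_mult[OF subfield]
    by (simp add: embedding_diff[OF subfield \<rho>] embedding_mult[OF subfield \<rho>]
        embedding_of_int[OF subfield \<rho>] embedding_Rats[OF subfield \<rho>])
  then show ?thesis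
    using embedding_quadratic_root[OF assms] unit_sign_real_place[OF assms(1)] by auto
qed

text \<open>If the product were rational, each of \<open>u\<close>, \<open>u'\<close> would lie in the quadratic field of the other,
  and the two fundamental units would coincide.\<close>

lemma discriminant_roots_mult_irrational:
  assumes u: "u \<in> fundamental_units" and u': "u' \<in> fundamental_units" and "u \<noteq> u'"
  shows "(2 * u - of_int A) * (2 * u' - of_int A') \<notin> \<rat>"
proof
  define y y' where "y = 2 * u - of_int A" and "y' = 2 * u' - of_int A'"
  assume "(2 * u - of_int A) * (2 * u' - of_int A') \<in> \<rat>"
  then have rat: "y * y' \<in> \<rat>" "y' * y \<in> \<rat>" by (simp_all add: y_def y'_def mult.commute)
  obtain K K' where K: "quadratic_subfield L K" "fundamental_unit K u"
    and K': "quadratic_subfield L K'" "fundamental_unit K' u'"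
    using u u' by (auto simp: fundamental_units_def)
  have sub: "real_subfield K" "real_subfield K'"
    using K(1) K'(1) by (auto simp: quadratic_subfield_def)
  have "u \<in> K" "u' \<in> K'"
    using K(2) K'(2) by (auto simp: fundamental_unit_def units_of_ring_of_integers_def)
  then have "y \<in> K" "y' \<in> K'"
    by (simp_all add: y_def y'_def two_mult_diff_of_int_mem_iff[OF sub(1)]
        two_mult_diff_of_int_mem_iff[OF sub(2)])
  moreover have "y \<noteq> 0" "y' \<noteq> 0"
    unfolding y_def y'_def by (intro two_mult_diff_of_int_nonzero fundamental_units_mem(3) u u')+
  ultimately have "y' \<in> K" "y \<in> K'"
    using subfield_mem_if_mult_rational[OF sub(1)] subfield_mem_if_mult_rational[OF sub(2)] rat
    by blast+
  then have "u' \<in> K" "u \<in> K'"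
    by (simp_all add: y_def y'_def two_mult_diff_of_int_mem_iff[OF sub(1)]
        two_mult_diff_of_int_mem_iff[OF sub(2)])
  then show False using fundamental_unit_unique[OF K(2) K'(2)] \<open>u \<noteq> u'\<close> by blast
qed

text \<open>The embeddings act on the square roots \<open>y\<close>, \<open>y'\<close> of the discriminants by the unit signs, so
  the product of two unit signs is \<open>\<rho> \<mapsto> \<rho> (y * y') / (y * y')\<close>, whose sum vanishes.\<close>

lemma inner_on_unit_signs_orthogonal:
  assumes u: "u \<in> fundamental_units" and u': "u' \<in> fundamental_units" and "u \<noteq> u'"
  shows "inner_on P (unit_sign u) (unit_sign u') = 0"
proof -
  obtain A C :: int where eq: "u\<^sup>2 = of_int A * u + of_int C" and C: "C = 1 \<or> C = -1"
    using fundamental_units_mem(4)[OF u] by blast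
  obtain A' C' :: int where eq': "u'\<^sup>2 = of_int A' * u' + of_int C'" and C': "C' = 1 \<or> C' = -1"
    using fundamental_units_mem(4)[OF u'] by blast
  define y y' where "y = 2 * u - of_int A" and "y' = 2 * u' - of_int A'"
  have "u \<in> L" "u' \<in> L" using fundamental_units_mem u u' by auto
  then have "y * y' \<in> L"
    by (simp add: y_def y'_def two_mult_diff_of_int_mem_iff[OF subfield] subfield_mult[OF subfield])
  have "y\<^sup>2 = of_int (A\<^sup>2 + 4 * C)" "y'\<^sup>2 = of_int (A'\<^sup>2 + 4 * C')"
    using eq eq' by (simp_all add: y_def y'_def power2_eq_square algebra_simps)
  then have "(y * y')\<^sup>2 \<in> \<rat>" by (simp add: power_mult_distrib)
  have irr: "y * y' \<notin> \<rat>"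
    unfolding y_def y'_def using discriminant_roots_mult_irrational[OF u u' \<open>u \<noteq> u'\<close>] .
  have "inner_on P (unit_sign u) (unit_sign u') = (\<Sum>\<rho>\<in>Emb. \<rho> (y * y') / (y * y'))"
    unfolding inner_on_def sum_arch_places
  proof (rule sum.cong)
    fix \<rho> assume \<rho>: "\<rho> \<in> Emb"
    have "\<rho> (y * y') = \<rho> y * \<rho> y'"
      using embedding_mult[OF subfield] \<rho> \<open>u \<in> L\<close> \<open>u' \<in> L\<close>
      by (simp add: Emb_def y_def y'_def two_mult_diff_of_int_mem_iff[OF subfield])
    also have "\<dots> = unit_sign u (real_place \<rho>) * unit_sign u' (real_place \<rho>) * (y * y')"
      using embedding_discriminant_root[OF \<rho> \<open>u \<in> L\<close> eq]
        embedding_discriminant_root[OF \<rho> \<open>u' \<in> L\<close> eq']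
      by (simp add: y_def y'_def)
    finally show "unit_sign u (real_place \<rho>) * unit_sign u' (real_place \<rho>) = \<rho> (y * y') / (y * y')"
      using irr by auto
  qed simp
  also have "\<dots> = 0"
    using sum_embeddings_eq_0[OF \<open>y * y' \<in> L\<close> irr \<open>(y * y')\<^sup>2 \<in> \<rat>\<close>]
    by (simp add: sum_divide_distrib[symmetric])
  finally show ?thesis .
qed

lemma inner_on_LOG_unit_sign:
  assumes "e \<in> fundamental_unit_group L" "u \<in> fundamental_units"
  shows "inner_on P (LOG L e) (unit_sign u) \<in> range (\<lambda>k::int. of_int k * (field_degree L * ln u))"
proof -
  have "inner_on P (LOG L s) (unit_sign u) \<in> range (\<lambda>k::int. of_int k * (field_degree L * ln u))"
    if s: "s \<in> fundamental_units" for s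
  proof -
    have "inner_on P (LOG L s) (unit_sign u) = ln s * inner_on P (unit_sign s) (unit_sign u)"
      by (simp add: LOG_fundamental_unit[OF s] inner_on_scale_left)
    also have "\<dots> = of_int (if s = u then 1 else 0) * (field_degree L * ln u)"
    proof (cases "s = u")
      case True then show ?thesis using inner_on_unit_sign_self[of u] by simp
    next
      case False then show ?thesis using inner_on_unit_signs_orthogonal[OF s assms(2) False] by simp
    qed
    finally show ?thesis by (rule range_eqI)
  qed
  then have "LOG L e \<in> (\<lambda>a. inner_on P a (unit_sign u)) -`
      range (\<lambda>k::int. of_int k * (field_degree L * ln u))"
    using LOG_fundamental_unit_group_mem[OF add_subgroup_vimage[OF additive_inner_on_left
        add_subgroup_int_multiples] _ assms(1)] by simp
  then show ?thesis by simp
qed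

lemma wedge_inner_unit_signs_int:
  assumes w: "w \<in> wedge2_LOG L (fundamental_unit_group L)"
    and u: "u \<in> fundamental_units" "u' \<in> fundamental_units"
  shows "wedge_inner P w (wedge (unit_sign u) (unit_sign u'))
    \<in> range (\<lambda>k::int. of_int k * (2 * (field_degree L)\<^sup>2 * ln u * ln u'))"
proof -
  define N where "N = real (field_degree L)"
  have "wedge_inner P (wedge (LOG L e1) (LOG L e2)) (wedge (unit_sign u) (unit_sign u'))
      \<in> range (\<lambda>k::int. of_int k * (2 * N\<^sup>2 * ln u * ln u'))"
    if e: "e1 \<in> fundamental_unit_group L" "e2 \<in> fundamental_unit_group L" for e1 e2
  proof -
    have range_N: "x \<in> range (\<lambda>k::int. of_int k * (field_degree L * c)) \<Longrightarrow>
        \<exists>k::int. x = of_int k * (N * c)" for x c :: real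
      by (auto simp: N_def)
    obtain k1 k1' k2 k2' :: int
      where "inner_on P (LOG L e1) (unit_sign u) = of_int k1 * (N * ln u)"
        and "inner_on P (LOG L e1) (unit_sign u') = of_int k1' * (N * ln u')"
        and "inner_on P (LOG L e2) (unit_sign u) = of_int k2 * (N * ln u)"
        and "inner_on P (LOG L e2) (unit_sign u') = of_int k2' * (N * ln u')"
      using range_N[OF inner_on_LOG_unit_sign[OF e(1) u(1)]]
        range_N[OF inner_on_LOG_unit_sign[OF e(1) u(2)]]
        range_N[OF inner_on_LOG_unit_sign[OF e(2) u(1)]]
        range_N[OF inner_on_LOG_unit_sign[OF e(2) u(2)]]
      by blast
    then have "wedge_inner P (wedge (LOG L e1) (LOG L e2)) (wedge (unit_sign u) (unit_sign u'))
        = of_int (k1 * k2' - k1' * k2) * (2 * N\<^sup>2 * ln u * ln u')"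
      by (simp add: wedge_inner_wedge algebra_simps power2_eq_square)
    then show ?thesis by blast
  qed
  then have "wedge2_LOG L (fundamental_unit_group L) \<subseteq>
      (\<lambda>w. wedge_inner P w (wedge (unit_sign u) (unit_sign u'))) -`
        range (\<lambda>k::int. of_int k * (2 * N\<^sup>2 * ln u * ln u'))"
    unfolding wedge2_LOG_def
    by (intro add_subgroup_gen_subset add_subgroup_vimage additive_wedge_inner_left
        add_subgroup_int_multiples) blast
  then show ?thesis using w by (auto simp: N_def)
qed

text \<open>If \<open>w\<close> were orthogonal to all wedges of unit signs, then by additivity it would be orthogonal
  to every generator of \<open>wedge2_LOG\<close>, hence to itself.\<close>

lemma exists_unit_signs_wedge_inner_nonzero:
  assumes w: "w \<in> wedge2_LOG L (fundamental_unit_group L)" "w \<noteq> 0"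
  shows "\<exists>u\<in>fundamental_units. \<exists>u'\<in>fundamental_units.
    wedge_inner P w (wedge (unit_sign u) (unit_sign u')) \<noteq> 0"
proof (rule ccontr)
  assume "\<not> ?thesis"
  then have zero: "wedge_inner P w (wedge (unit_sign u) (unit_sign u')) = 0"
    if "u \<in> fundamental_units" "u' \<in> fundamental_units" for u u'
    using that by blast
  have zero_left: "wedge_inner P w (wedge (LOG L e) (unit_sign u)) = 0"
    if "e \<in> fundamental_unit_group L" "u \<in> fundamental_units" for e u
    using LOG_fundamental_unit_group_mem[OF add_subgroup_vimage[OF additive_wedge_inner_wedge_left
        add_subgroup_zero] _ that(1)] zero[OF _ that(2)]
    by (simp add: LOG_fundamental_unit wedge_inner_wedge_scale_left)
  have zero_both: "wedge_inner P w (wedge (LOG L e1) (LOG L e2)) = 0"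
    if "e1 \<in> fundamental_unit_group L" "e2 \<in> fundamental_unit_group L" for e1 e2
    using LOG_fundamental_unit_group_mem[OF add_subgroup_vimage[OF additive_wedge_inner_wedge_right
        add_subgroup_zero] _ that(2)] zero_left[OF that(1)]
    by (simp add: LOG_fundamental_unit wedge_inner_wedge_scale_right)
  have "wedge2_LOG L (fundamental_unit_group L) \<subseteq> wedge_inner P w -` {0}"
    unfolding wedge2_LOG_def
    using zero_both
    by (intro add_subgroup_gen_subset add_subgroup_vimage additive_wedge_inner_right
        add_subgroup_zero) blast
  then have "wedge_inner P w w = 0" using w(1) by blast
  then have "w v1 v2 = 0" for v1 v2
    using wedge_inner_self_eq_0D[OF finite_arch_places] wedge2_LOG_outside[OF w(1)] by blast
  then show False using w(2) by (simp add: fun_eq_iff)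
qed

theorem wedge_norm1_lower_bound:
  assumes w: "w \<in> wedge2_LOG L (fundamental_unit_group L)" "w \<noteq> 0"
  shows "(field_degree L)\<^sup>2 / 2 * (ln ((1 + sqrt 5) / 2) * ln (1 + sqrt 2)) \<le> wedge_norm1 P w"
proof -
  obtain u u' where u: "u \<in> fundamental_units" "u' \<in> fundamental_units"
    and nz: "wedge_inner P w (wedge (unit_sign u) (unit_sign u')) \<noteq> 0"
    using exists_unit_signs_wedge_inner_nonzero[OF w] by blast
  then have "u \<noteq> u'" by (auto simp: wedge_self wedge_inner_def)
  obtain k :: int where k: "wedge_inner P w (wedge (unit_sign u) (unit_sign u'))
      = of_int k * (2 * (field_degree L)\<^sup>2 * ln u * ln u')"
    using wedge_inner_unit_signs_int[OF w(1) u] by blast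
  have "u > 1" "u' > 1" using fundamental_units_mem u by auto
  then have pos: "0 < 2 * (field_degree L)\<^sup>2 * ln u * ln u'"
    using k nz by (auto simp: zero_less_mult_iff)
  have "ln ((1 + sqrt 5) / 2) * ln (1 + sqrt 2) \<le> ln u * ln u'"
    using ln_golden_ratio_silver_ratio_le[OF _ _ \<open>u \<noteq> u'\<close>] quadratic_unit_bounds
      fundamental_units_mem u by meson
  then have "(field_degree L)\<^sup>2 / 2 * (ln ((1 + sqrt 5) / 2) * ln (1 + sqrt 2))
      \<le> (field_degree L)\<^sup>2 / 2 * (ln u * ln u')"
    by (intro mult_left_mono) auto
  also have "\<dots> = (2 * (field_degree L)\<^sup>2 * ln u * ln u') / 4" by simp
  also have "\<dots> \<le> \<bar>of_int k\<bar> * (2 * (field_degree L)\<^sup>2 * ln u * ln u') / 4"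
  proof -
    have "1 \<le> \<bar>real_of_int k\<bar>" using k nz by auto
    from mult_right_mono[OF this less_imp_le[OF pos]] show ?thesis by (simp add: ac_simps)
  qed
  also have "\<dots> = \<bar>wedge_inner P w (wedge (unit_sign u) (unit_sign u'))\<bar> / 4"
    unfolding k using abs_mult_pos[OF less_imp_le[OF pos], of "of_int k"] by simp
  also have "\<dots> \<le> wedge_norm1 P w"
    using abs_wedge_inner_wedge_le[of "unit_sign u" "unit_sign u'" P w] abs_unit_sign_le by simp
  finally show ?thesis .
qed

end

theorem mainTheorem5:
  fixes n :: nat and L :: "real set" and w :: "(real \<Rightarrow> complex) set \<Rightarrow> (real \<Rightarrow> complex) set \<Rightarrow> real"
  assumes "n \<ge> 2"
    and "number_field L"
    and "totally_real L"
    and "galois_over_Q L"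
    and "galois_group L \<cong> Z2_power n"
    and "w \<in> wedge2_LOG L (fundamental_unit_group L)"
    and "w \<noteq> 0"
  shows "wedge_norm1 (arch_places L) w \<ge>
           2 ^ (2 * n - 1) * ln ((1 + sqrt 5) / 2) * ln (1 + sqrt 2)"
proof -
  obtain B where "number_field_basis L B"
    using assms(2) by (auto simp: number_field_def number_field_basis_def)
  then interpret totally_real_galois_field L B
    using assms(3,4) by (simp add: totally_real_galois_field_def totally_real_galois_field_axioms_def)
  have "field_degree L = card (carrier (Z2_power n))"
    using iso_same_card[OF assms(5)] galois by (simp add: galois_over_Q_def galois_group_def)
  also have "\<dots> = 2 ^ n"
    by (simp add: Z2_power_def carrier_integer_mod_group card_PiE)
  finally have "(field_degree L)\<^sup>2 / 2 = (2 :: real) ^ (2 * n - 1)"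
    using assms(1) by (simp add: power_mult[symmetric] power_diff)
  then show ?thesis using wedge_norm1_lower_bound[OF assms(6,7)] by (simp add: mult.assoc)
qed

end
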